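(* For $n\ge 0$, $$(\mathfrak C_0+\mathfrak C_0)^n=(2n)!\sum_{l=0}^{n}\frac{(-1)^{n-l}(2n-2l-3)!!\,(2l-1)}{2^{n-l}(n-l)!\,(2l)!}\mathfrak C_{2l}.$$
   Context: The numbers $\mathfrak C_{2n}$ (Cauchy numbers with level $2$) are defined by $\frac{t}{{\rm arcsinh}\,t}=\sum_{n=0}^\infty\mathfrak C_{2n}\frac{t^{2n}}{(2n)!}$ (equivalently $\mathfrak C_{2n}=\mathfrak C_{2n}^{(1)}$, where ${\rm Lif}_{2,1}({\rm arcsinh}\,t)=\sum_n\mathfrak C_n^{(1)}t^n/n!$ with ${\rm Lif}_{2,1}(z)=\sum_{m\ge0}\frac{z^{2m}}{(2m+1)!}$). Convolution notation: $(\mathfrak C_{2j_1}+\cdots+\mathfrak C_{2j_k})^n:=\sum_{i_1+\cdots+i_k=n,\ i_1,\dots,i_k\ge0}\frac{(2n)!}{(2i_1)!\cdots(2i_k)!}\mathfrak C_{2i_1+2j_1}\cdots\mathfrak C_{2i_k+2j_k}$. Double factorials: $(2i-1)!!=(2i-1)(2i-3)\cdots1$ for $i\ge1$, $(-1)!!=1$, and $(-(2i+1))!!=\frac{(-1)^i}{(2i-1)!!}$ for $i\ge1$. *)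

theory Defs
  imports "HOL-Analysis.Analysis"
begin

definition t_over_arsinh :: "real \<Rightarrow> real" where
  "t_over_arsinh t = (if t = 0 then 1 else t / arsinh t)"

text \<open>Taylor coefficients: t / arcsinh t = sum_n C_n t^n / n!, i.e. C_n is the n-th
  derivative at 0.  The paper's C_{2n} is cauchy2 (2*n).\<close>
definition cauchy2 :: "nat \<Rightarrow> real" where
  "cauchy2 m = (deriv ^^ m) t_over_arsinh 0"

text \<open>Double factorial for odd integers, including the negative convention
  (-1)!! = 1 and (-(2i+1))!! = (-1)^i / (2i-1)!!.\<close>
definition odd_dfact :: "int \<Rightarrow> real" where
  "odd_dfact m = (if m \<ge> -1 then (\<Prod>j<nat ((m + 1) div 2). real (2 * j + 1))
     else (let i = nat ((- m - 1) div 2) in (-1) ^ i / (\<Prod>j<i. real (2 * j + 1))))"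

definition cauchy2_conv2 :: "nat \<Rightarrow> real" where
  "cauchy2_conv2 n = (\<Sum>i\<le>n. fact (2 * n) / (fact (2 * i) * fact (2 * (n - i)))
      * cauchy2 (2 * i) * cauchy2 (2 * (n - i)))"

end

theory Submission
  imports Defs "HOL-Complex_Analysis.Complex_Analysis"
begin

(* The even function f(z) = z / arsinh z has f' = (arsinh z - z / s(z)) / arsinh^2 z with
   s(z) = sqrt (1 + z^2), hence satisfies f^2 = (f - z f') s.  Differentiating this 2n times
   at 0 by the Leibniz rule, the left side becomes the convolution (C_0 + C_0)^n once the
   vanishing odd coefficients of f are dropped; on the right (z f')^(k)(0) = k f^(k)(0) and
   s^(2m)(0) = (2m)! binom(1/2, m) = -(-1)^m (2m)! (2m-3)!! / (2^m m!).  All derivatives are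
   taken of the holomorphic extension of f to the disc |z| < 1/2, whose derivatives at real
   points agree with the real derivatives. *)

lemma sum_even_indices:
  fixes g :: "nat \<Rightarrow> 'a::comm_monoid_add"
  assumes "\<And>i. odd i \<Longrightarrow> g i = 0"
  shows "(\<Sum>i = 0..2*n. g i) = (\<Sum>k\<le>n. g (2*k))"
proof (induction n)
  case (Suc n)
  have "(\<Sum>i = 0..2 * Suc n. g i) = (\<Sum>i = 0..2*n. g i) + g (2*n + 1) + g (2*n + 2)"
    by (simp add: add.assoc)
  with Suc assms[of "2*n + 1"] show ?case by simp
qed simp

lemma gbinomial_Suc_recurrence:
  fixes a :: "'a::field_char_0"
  shows "(a gchoose Suc k) = (a gchoose k) * (a - of_nat k) / of_nat (Suc k)"
  using gbinomial_mult_1[of a k] by (simp add: field_simps del: of_nat_Suc)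

lemma odd_dfact_step: "odd_dfact (2 * int m - 1) = (2 * real m - 1) * odd_dfact (2 * int m - 3)"
proof (cases m)
  case (Suc j)
  have "nat ((2 * int m - 1 + 1) div 2) = Suc j" "nat ((2 * int m - 3 + 1) div 2) = j"
    using Suc by simp_all
  with Suc show ?thesis by (simp add: odd_dfact_def algebra_simps)
qed (simp add: odd_dfact_def)

lemma gbinomial_half_odd_dfact:
  "(1/2 gchoose m :: real) = - ((-1) ^ m * odd_dfact (2 * int m - 3) / (2 ^ m * fact m))"
proof (induction m)
  case 0
  show ?case by (simp add: odd_dfact_def)
next
  case (Suc m)
  have "2 * int (Suc m) - 3 = 2 * int m - 1" by simp
  then show ?case
    by (simp only: gbinomial_Suc_recurrence Suc.IH odd_dfact_step) (simp add: field_simps)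
qed

lemma binomial_mult_gbinomial_half:
  fixes l n :: nat
  assumes "l \<le> n"
  shows "real (2*n choose (2*l)) * (1 - 2 * real l) * (fact (2*(n-l)) * (1/2 gchoose (n-l)))
    = fact (2*n) * ((-1) ^ (n-l) * odd_dfact (2 * int n - 2 * int l - 3) * (2 * real l - 1)
      / (2 ^ (n-l) * fact (n-l) * fact (2*l)))"
proof -
  have binom: "real (2*n choose (2*l)) = fact (2*n) / (fact (2*l) * fact (2*(n-l)))"
    using assms by (simp add: binomial_fact right_diff_distrib')
  have index: "2 * int n - 2 * int l - 3 = 2 * int (n-l) - 3"
    using assms by simp
  show ?thesis
    unfolding binom index gbinomial_half_odd_dfact by (simp add: field_simps)
qed

lemma higher_deriv_even_function_odd:
  fixes h :: "complex \<Rightarrow> complex"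
  assumes h: "h holomorphic_on S" and S: "open S" "0 \<in> S"
    and sym: "\<And>z. z \<in> S \<Longrightarrow> -z \<in> S \<and> h (-z) = h z" and n: "odd n"
  shows "(deriv ^^ n) h 0 = 0"
proof -
  have "(deriv ^^ n) h 0 = (deriv ^^ n) (\<lambda>w. h (-1 * w)) 0"
    using eventually_nhds_in_open[OF S]
    by (intro higher_deriv_cong_ev) (auto elim!: eventually_mono simp: sym)
  also have "\<dots> = (-1) ^ n * (deriv ^^ n) h (-1 * 0)"
    by (rule higher_deriv_compose_linear[OF h S(1) S(1) S(2)]) (simp add: sym)
  finally show ?thesis using n by simp
qed

lemma higher_deriv_id_mult_0:
  fixes h :: "complex \<Rightarrow> complex"
  assumes "h holomorphic_on S" "open S" "0 \<in> S"
  shows "(deriv ^^ Suc k) (\<lambda>z. z * h z) 0 = of_nat (Suc k) * (deriv ^^ k) h 0"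
proof -
  have "(deriv ^^ Suc k) (\<lambda>z. z * h z) 0 =
      (\<Sum>i = 0..Suc k. of_nat (Suc k choose i) * (deriv ^^ i) (\<lambda>w. w) 0
                          * (deriv ^^ (Suc k - i)) h 0)"
    using assms by (intro higher_deriv_mult) (auto intro: holomorphic_intros)
  also have "\<dots> = (\<Sum>i = 0..Suc k. if i = 1 then of_nat (Suc k) * (deriv ^^ k) h 0 else 0)"
    by (intro sum.cong refl) auto
  finally show ?thesis by (simp add: sum.delta)
qed

lemma higher_deriv_id_mult_deriv_0:
  fixes h :: "complex \<Rightarrow> complex"
  assumes "h holomorphic_on S" "open S" "0 \<in> S"
  shows "(deriv ^^ k) (\<lambda>z. z * deriv h z) 0 = of_nat k * (deriv ^^ k) h 0"
proof (cases k)
  case (Suc j)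
  have "(deriv ^^ Suc j) (\<lambda>z. z * deriv h z) 0 = of_nat (Suc j) * (deriv ^^ j) (deriv h) 0"
    using assms by (intro higher_deriv_id_mult_0 holomorphic_deriv)
  moreover have "(deriv ^^ j) (deriv h) = (deriv ^^ Suc j) h"
    by (simp add: funpow_Suc_right del: funpow.simps)
  ultimately show ?thesis using Suc by (simp del: funpow.simps)
qed simp

lemma higher_deriv_of_real_restriction:
  fixes f :: "complex \<Rightarrow> complex" and g :: "real \<Rightarrow> real"
  assumes f: "f holomorphic_on S" and S: "open S" and T: "open T"
    and TS: "\<And>t. t \<in> T \<Longrightarrow> complex_of_real t \<in> S"
    and fg: "\<And>t. t \<in> T \<Longrightarrow> f (of_real t) = of_real (g t)" and t: "t \<in> T"
  shows "(deriv ^^ m) f (of_real t) = of_real ((deriv ^^ m) g t)"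
  using t
proof (induction m arbitrary: t)
  case 0
  then show ?case by (simp add: fg)
next
  case (Suc m)
  define D where "D = deriv ((deriv ^^ m) f) (of_real t)"
  have "((deriv ^^ m) f has_field_derivative D) (at (of_real t))"
    unfolding D_def using Suc.prems
    by (intro holomorphic_derivI[OF holomorphic_higher_deriv[OF f S] S] TS)
  then have "((\<lambda>x. (deriv ^^ m) f (of_real x)) has_vector_derivative D) (at t)"
    by (rule has_vector_derivative_real_field)
  then have D: "((\<lambda>x. complex_of_real ((deriv ^^ m) g x)) has_vector_derivative D) (at t)"
    by (rule has_vector_derivative_transform_within_open[where S=T]) (use T Suc in auto)
  have "((deriv ^^ m) g has_real_derivative Re D) (at t)"
    using has_field_derivative_Re[OF D] by simp
  moreover have "((\<lambda>x. 0) has_real_derivative Im D) (at t)"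
    using has_field_derivative_Im[OF D] by simp
  then have "Im D = 0"
    using DERIV_unique DERIV_const by blast
  ultimately show ?case by (simp add: D_def complex_eq_iff DERIV_imp_deriv)
qed

definition sqrt_1z2 :: "complex \<Rightarrow> complex" where
  "sqrt_1z2 z = csqrt (1 + z^2)"

definition carsinh :: "complex \<Rightarrow> complex" where
  "carsinh z = Ln (z + sqrt_1z2 z)"

definition z_over_carsinh :: "complex \<Rightarrow> complex" where
  "z_over_carsinh z = (if z = 0 then 1 else z / carsinh z)"

abbreviation half_disc :: "complex set" where
  "half_disc \<equiv> ball 0 (1/2)"

lemma Re_one_plus_sq_ge:
  assumes "z \<in> half_disc" shows "3/4 \<le> Re (1 + z^2)"
proof -
  have "cmod z ^ 2 < (1/2)^2" using assms by (intro power_strict_mono) auto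
  then have "Re z ^ 2 + Im z ^ 2 < 1/4" using cmod_power2[of z] by (simp add: power2_eq_square)
  then show ?thesis by (simp add: power2_eq_square) (smt (verit) zero_le_power2 power2_eq_square)
qed

lemma Re_sqrt_1z2_gt:
  assumes "z \<in> half_disc" shows "1/2 < Re (sqrt_1z2 z)"
proof -
  have "sqrt (3/4) \<le> sqrt ((cmod (1 + z^2) + Re (1 + z^2)) / 2)"
    using Re_one_plus_sq_ge[OF assms] complex_Re_le_cmod[of "1 + z^2"]
    by (intro real_sqrt_le_mono) (simp add: divide_simps)
  moreover have "1/2 < sqrt (3/4::real)" by (rule real_less_rsqrt) (simp add: power2_eq_square)
  moreover have "Re (sqrt_1z2 z) = sqrt ((cmod (1 + z^2) + Re (1 + z^2)) / 2)"
    by (simp add: sqrt_1z2_def)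
  ultimately show ?thesis by linarith
qed

lemma one_plus_sq_notin_nonpos_Reals: "z \<in> half_disc \<Longrightarrow> 1 + z^2 \<notin> \<real>\<^sub>\<le>\<^sub>0"
  using Re_one_plus_sq_ge[of z] by (auto simp: complex_nonpos_Reals_iff)

lemma carsinh_arg_notin_nonpos_Reals:
  assumes "z \<in> half_disc" shows "z + sqrt_1z2 z \<notin> \<real>\<^sub>\<le>\<^sub>0"
proof -
  have "\<bar>Re z\<bar> < 1/2" using assms abs_Re_le_cmod[of z] by simp
  with Re_sqrt_1z2_gt[OF assms] show ?thesis by (auto simp: complex_nonpos_Reals_iff)
qed

lemma carsinh_arg_nonzero: "z \<in> half_disc \<Longrightarrow> z + sqrt_1z2 z \<noteq> 0"
  using carsinh_arg_notin_nonpos_Reals by fastforce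

lemma sqrt_1z2_squared: "sqrt_1z2 z ^ 2 = 1 + z^2"
  by (simp add: sqrt_1z2_def)

lemma sqrt_1z2_nonzero: "z \<in> half_disc \<Longrightarrow> sqrt_1z2 z \<noteq> 0"
  using Re_sqrt_1z2_gt[of z] by auto

lemma sqrt_1z2_0 [simp]: "sqrt_1z2 0 = 1"
  by (simp add: sqrt_1z2_def)

lemma sqrt_1z2_minus: "sqrt_1z2 (-z) = sqrt_1z2 z"
  by (simp add: sqrt_1z2_def)

lemma carsinh_0 [simp]: "carsinh 0 = 0"
  by (simp add: carsinh_def)

lemma has_field_derivative_sqrt_1z2:
  "z \<in> half_disc \<Longrightarrow> (sqrt_1z2 has_field_derivative z / sqrt_1z2 z) (at z)"
  unfolding sqrt_1z2_def [abs_def]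
  by (rule derivative_eq_intros refl | simp add: one_plus_sq_notin_nonpos_Reals)+

lemma has_field_derivative_carsinh:
  assumes z: "z \<in> half_disc" shows "(carsinh has_field_derivative 1 / sqrt_1z2 z) (at z)"
proof -
  have "((\<lambda>w. w + sqrt_1z2 w) has_field_derivative 1 + z / sqrt_1z2 z) (at z)"
    by (intro derivative_intros has_field_derivative_sqrt_1z2 z)
  from DERIV_chain[OF has_field_derivative_Ln[OF carsinh_arg_notin_nonpos_Reals[OF z]] this]
  have "(carsinh has_field_derivative (1 + z / sqrt_1z2 z) / (z + sqrt_1z2 z)) (at z)"
    by (simp add: carsinh_def [abs_def] o_def divide_inverse mult.commute)
  moreover have "1 + z / sqrt_1z2 z = (z + sqrt_1z2 z) / sqrt_1z2 z"
    using sqrt_1z2_nonzero[OF z] by (simp add: field_simps)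
  ultimately show ?thesis using carsinh_arg_nonzero[OF z] by simp
qed

lemma holomorphic_sqrt_1z2: "sqrt_1z2 holomorphic_on half_disc"
  using has_field_derivative_sqrt_1z2 holomorphic_on_open field_differentiable_def by blast

lemma holomorphic_carsinh: "carsinh holomorphic_on half_disc"
  using has_field_derivative_carsinh holomorphic_on_open field_differentiable_def by blast

lemma carsinh_eq_0_iff:
  assumes "z \<in> half_disc" shows "carsinh z = 0 \<longleftrightarrow> z = 0"
proof
  assume "carsinh z = 0"
  then have "sqrt_1z2 z = 1 - z"
    using carsinh_arg_notin_nonpos_Reals[OF assms] by (simp add: carsinh_def algebra_simps)
  then have "(1 - z)^2 = 1 + z^2" using sqrt_1z2_squared[of z] by simp
  then show "z = 0" by (simp add: power2_eq_square algebra_simps)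
qed simp

lemma carsinh_minus:
  assumes z: "z \<in> half_disc" shows "carsinh (-z) = - carsinh z"
proof -
  have "(sqrt_1z2 z - z) * (sqrt_1z2 z + z) = 1"
    using sqrt_1z2_squared[of z] by (simp add: algebra_simps power2_eq_square)
  then have "-z + sqrt_1z2 z = inverse (z + sqrt_1z2 z)"
    using carsinh_arg_nonzero[OF z] by (simp add: field_simps)
  then show ?thesis
    using Ln_inverse[OF carsinh_arg_notin_nonpos_Reals[OF z]]
    by (simp add: carsinh_def sqrt_1z2_minus)
qed

lemma z_over_carsinh_minus: "z \<in> half_disc \<Longrightarrow> z_over_carsinh (-z) = z_over_carsinh z"
  by (auto simp: z_over_carsinh_def carsinh_minus)

lemma holomorphic_z_over_carsinh: "z_over_carsinh holomorphic_on half_disc"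
proof -
  have deriv_0: "deriv carsinh 0 = 1"
    using has_field_derivative_carsinh[of 0] by (simp add: DERIV_imp_deriv)
  \<comment> \<open>z / arsinh z is the reciprocal of the difference quotient of arsinh at 0\<close>
  let ?q = "\<lambda>z. if z = 0 then deriv carsinh 0 else (carsinh z - carsinh 0) / (z - 0)"
  have "?q holomorphic_on half_disc"
    by (rule pole_lemma_open[OF holomorphic_carsinh open_ball])
  then have "(\<lambda>z. 1 / ?q z) holomorphic_on half_disc"
    by (rule holomorphic_on_divide[rotated]) (auto simp: deriv_0 carsinh_eq_0_iff)
  then show ?thesis
    by (rule holomorphic_transform) (simp add: z_over_carsinh_def deriv_0)
qed

lemma z_over_carsinh_ode:
  assumes z: "z \<in> half_disc"
  shows "z_over_carsinh z * z_over_carsinh z =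
         (z_over_carsinh z - z * deriv z_over_carsinh z) * sqrt_1z2 z"
proof (cases "z = 0")
  case True
  then show ?thesis by (simp add: z_over_carsinh_def)
next
  case False
  have A: "carsinh z \<noteq> 0" using carsinh_eq_0_iff[OF z] False by simp
  have "((\<lambda>w. w / carsinh w) has_field_derivative
          (1 * carsinh z - z * (1 / sqrt_1z2 z)) / (carsinh z * carsinh z)) (at z)"
    by (intro DERIV_divide has_field_derivative_carsinh z DERIV_ident A)
  then have "(z_over_carsinh has_field_derivative
               (1 * carsinh z - z * (1 / sqrt_1z2 z)) / (carsinh z * carsinh z)) (at z)"
    by (rule has_field_derivative_transform_within_open[where S="half_disc - {0}"])
       (use z False in \<open>auto simp: z_over_carsinh_def\<close>)
  then have deriv_eq: "deriv z_over_carsinh z =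
      (1 * carsinh z - z * (1 / sqrt_1z2 z)) / (carsinh z * carsinh z)"
    by (rule DERIV_imp_deriv)
  show ?thesis
    using A False sqrt_1z2_nonzero[OF z]
    by (simp add: deriv_eq z_over_carsinh_def field_simps)
qed

lemma z_over_carsinh_of_real: "z_over_carsinh (of_real t) = of_real (t_over_arsinh t)"
proof (cases "t = 0")
  case False
  have "1 + (complex_of_real t)^2 = complex_of_real (t^2 + 1)"
    by simp
  then have "sqrt_1z2 (of_real t) = of_real (sqrt (t^2 + 1))"
    unfolding sqrt_1z2_def by (simp add: csqrt_of_real del: of_real_add)
  then have "carsinh (of_real t) = of_real (arsinh t)"
    using arsinh_real_aux[of t]
    by (simp add: carsinh_def arsinh_real_def Ln_of_real flip: of_real_add)
  with False show ?thesis by (simp add: z_over_carsinh_def t_over_arsinh_def)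
qed (simp add: z_over_carsinh_def t_over_arsinh_def)

lemma higher_deriv_z_over_carsinh_0: "(deriv ^^ m) z_over_carsinh 0 = of_real (cauchy2 m)"
proof -
  have "complex_of_real t \<in> half_disc" if "t \<in> {-1/2<..<1/2}" for t
    using that by (auto simp: abs_if)
  then show ?thesis
    using higher_deriv_of_real_restriction[OF holomorphic_z_over_carsinh open_ball,
            of "{-1/2<..<1/2}" t_over_arsinh 0 m]
    by (simp add: cauchy2_def z_over_carsinh_of_real)
qed

lemma cauchy2_odd: "odd m \<Longrightarrow> cauchy2 m = 0"
  using higher_deriv_even_function_odd[OF holomorphic_z_over_carsinh open_ball, of m]
  by (simp add: higher_deriv_z_over_carsinh_0 z_over_carsinh_minus)

lemma sqrt_1z2_ode:
  assumes z: "z \<in> half_disc"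
  shows "deriv sqrt_1z2 z + z * (z * deriv sqrt_1z2 z) = z * sqrt_1z2 z"
proof -
  have "deriv sqrt_1z2 z = z / sqrt_1z2 z"
    using has_field_derivative_sqrt_1z2[OF z] by (rule DERIV_imp_deriv)
  then have "deriv sqrt_1z2 z + z * (z * deriv sqrt_1z2 z) = z / sqrt_1z2 z * (1 + z * z)"
    by (simp add: algebra_simps)
  also have "\<dots> = z / sqrt_1z2 z * (sqrt_1z2 z * sqrt_1z2 z)"
    using sqrt_1z2_squared[of z] by (simp add: power2_eq_square)
  finally show ?thesis using sqrt_1z2_nonzero[OF z] by simp
qed

lemma higher_deriv_sqrt_1z2_0_rec:
  "(deriv ^^ Suc (Suc k)) sqrt_1z2 0 = of_nat (Suc k) * (1 - of_nat k) * (deriv ^^ k) sqrt_1z2 0"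
proof -
  note S = holomorphic_sqrt_1z2
  have dS: "deriv sqrt_1z2 holomorphic_on half_disc"
    by (intro holomorphic_deriv S open_ball)
  have zdS: "(\<lambda>z. z * deriv sqrt_1z2 z) holomorphic_on half_disc"
    by (intro holomorphic_intros dS)
  have "(deriv ^^ Suc k) (\<lambda>z. deriv sqrt_1z2 z + z * (z * deriv sqrt_1z2 z)) 0 =
        (deriv ^^ Suc k) (\<lambda>z. z * sqrt_1z2 z) 0"
    by (rule higher_deriv_transform_within_open[OF _ _ open_ball])
       (auto intro!: holomorphic_intros dS S simp: sqrt_1z2_ode)
  moreover have "(deriv ^^ Suc k) (\<lambda>z. deriv sqrt_1z2 z + z * (z * deriv sqrt_1z2 z)) 0 =
      (deriv ^^ Suc k) (deriv sqrt_1z2) 0 + (deriv ^^ Suc k) (\<lambda>z. z * (z * deriv sqrt_1z2 z)) 0"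
    by (rule higher_deriv_add[OF dS _ open_ball]) (auto intro!: holomorphic_intros dS)
  moreover have "(deriv ^^ Suc k) (deriv sqrt_1z2) = (deriv ^^ Suc (Suc k)) sqrt_1z2"
    by (simp add: funpow_Suc_right del: funpow.simps)
  moreover have "(deriv ^^ Suc k) (\<lambda>z. z * (z * deriv sqrt_1z2 z)) 0 =
      of_nat (Suc k) * (of_nat k * (deriv ^^ k) sqrt_1z2 0)"
    using higher_deriv_id_mult_0[OF zdS open_ball, of k]
      higher_deriv_id_mult_deriv_0[OF S open_ball, of k]
    by (simp del: funpow.simps)
  moreover have "(deriv ^^ Suc k) (\<lambda>z. z * sqrt_1z2 z) 0 =
      of_nat (Suc k) * (deriv ^^ k) sqrt_1z2 0"
    using higher_deriv_id_mult_0[OF S open_ball, of k] by (simp del: funpow.simps)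
  ultimately show ?thesis by (simp add: algebra_simps del: funpow.simps)
qed

lemma higher_deriv_sqrt_1z2_even_0:
  "(deriv ^^ (2*m)) sqrt_1z2 0 = of_real (fact (2*m) * (1/2 gchoose m))"
proof (induction m)
  case 0
  show ?case by simp
next
  case (Suc m)
  have "2 * Suc m = Suc (Suc (2*m))" by simp
  then have "(deriv ^^ (2 * Suc m)) sqrt_1z2 0 =
      of_nat (Suc (2*m)) * (1 - of_nat (2*m)) * (deriv ^^ (2*m)) sqrt_1z2 0"
    by (simp only: higher_deriv_sqrt_1z2_0_rec)
  also have "\<dots> =
      of_real (real (Suc (2*m)) * (1 - real (2*m)) * (fact (2*m) * (1/2 gchoose m)))"
    by (simp add: Suc.IH)
  also have "real (Suc (2*m)) * (1 - real (2*m)) * (fact (2*m) * (1/2 gchoose m)) =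
      fact (2 * Suc m) * (1/2 gchoose Suc m)"
    by (simp add: gbinomial_Suc_recurrence field_simps)
  finally show ?case .
qed

lemma z_over_carsinh_leibniz:
  "(\<Sum>i = 0..k. of_nat (k choose i) * (deriv ^^ i) z_over_carsinh 0
                   * (deriv ^^ (k-i)) z_over_carsinh 0) =
   (\<Sum>i = 0..k. of_nat (k choose i) * ((1 - of_nat i) * (deriv ^^ i) z_over_carsinh 0)
                  * (deriv ^^ (k-i)) sqrt_1z2 0)"
proof -
  note F = holomorphic_z_over_carsinh and S = holomorphic_sqrt_1z2
  have dF: "deriv z_over_carsinh holomorphic_on half_disc"
    by (intro holomorphic_deriv F open_ball)
  let ?H = "\<lambda>z. z_over_carsinh z - z * deriv z_over_carsinh z"
  have H: "?H holomorphic_on half_disc"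
    by (intro holomorphic_intros dF F)
  have H_deriv: "(deriv ^^ i) ?H 0 = (1 - of_nat i) * (deriv ^^ i) z_over_carsinh 0" for i
  proof -
    have "(deriv ^^ i) ?H 0 =
        (deriv ^^ i) z_over_carsinh 0 - (deriv ^^ i) (\<lambda>z. z * deriv z_over_carsinh z) 0"
      by (rule higher_deriv_diff[OF F _ open_ball]) (auto intro!: holomorphic_intros dF)
    then show ?thesis
      using higher_deriv_id_mult_deriv_0[OF F open_ball, of i] by (simp add: algebra_simps)
  qed
  have "(deriv ^^ k) (\<lambda>z. z_over_carsinh z * z_over_carsinh z) 0 =
        (deriv ^^ k) (\<lambda>z. ?H z * sqrt_1z2 z) 0"
    by (rule higher_deriv_transform_within_open[OF _ _ open_ball])
       (auto intro!: holomorphic_intros H F S simp: z_over_carsinh_ode)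
  then show ?thesis
    using higher_deriv_mult[OF F F open_ball, of 0 k] higher_deriv_mult[OF H S open_ball, of 0 k]
    by (simp add: H_deriv)
qed

lemma cauchy2_convolution_ode:
  "(\<Sum>k\<le>n. real (2*n choose (2*k)) * cauchy2 (2*k) * cauchy2 (2*(n-k))) =
   (\<Sum>l\<le>n. real (2*n choose (2*l)) * (1 - 2 * real l)
              * (fact (2*(n-l)) * (1/2 gchoose (n-l))) * cauchy2 (2*l))"
proof -
  let ?F = "\<lambda>i. (deriv ^^ i) z_over_carsinh 0"
  have "complex_of_real (\<Sum>k\<le>n. real (2*n choose (2*k)) * cauchy2 (2*k) * cauchy2 (2*(n-k))) =
      (\<Sum>i = 0..2*n. of_nat (2*n choose i) * ?F i * ?F (2*n-i))"
    by (subst sum_even_indices)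
       (simp_all add: higher_deriv_z_over_carsinh_0 cauchy2_odd right_diff_distrib')
  also have "\<dots> = (\<Sum>i = 0..2*n. of_nat (2*n choose i) * ((1 - of_nat i) * ?F i)
                  * (deriv ^^ (2*n-i)) sqrt_1z2 0)"
    by (rule z_over_carsinh_leibniz)
  also have "\<dots> = complex_of_real (\<Sum>l\<le>n. real (2*n choose (2*l)) * (1 - 2 * real l)
                  * (fact (2*(n-l)) * (1/2 gchoose (n-l))) * cauchy2 (2*l))"
    by (subst sum_even_indices)
       (simp_all add: higher_deriv_z_over_carsinh_0 cauchy2_odd higher_deriv_sqrt_1z2_even_0
         flip: right_diff_distrib', simp add: mult_ac)
  finally show ?thesis by (simp only: of_real_eq_iff)
qed

theorem theorem2:
  fixes n :: nat
  shows "cauchy2_conv2 n = fact (2 * n) * (\<Sum>l\<le>n.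
     (-1) ^ (n - l) * odd_dfact (2 * int n - 2 * int l - 3) * (2 * real l - 1)
       / (2 ^ (n - l) * fact (n - l) * fact (2 * l)) * cauchy2 (2 * l))"
proof -
  have "cauchy2_conv2 n = (\<Sum>k\<le>n. real (2*n choose (2*k)) * cauchy2 (2*k) * cauchy2 (2*(n-k)))"
    unfolding cauchy2_conv2_def
    by (intro sum.cong refl) (simp add: binomial_fact right_diff_distrib')
  also have "\<dots> = (\<Sum>l\<le>n. real (2*n choose (2*l)) * (1 - 2 * real l)
                     * (fact (2*(n-l)) * (1/2 gchoose (n-l))) * cauchy2 (2*l))"
    by (rule cauchy2_convolution_ode)
  also have "\<dots> = fact (2 * n) * (\<Sum>l\<le>n.
     (-1) ^ (n - l) * odd_dfact (2 * int n - 2 * int l - 3) * (2 * real l - 1)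
       / (2 ^ (n - l) * fact (n - l) * fact (2 * l)) * cauchy2 (2 * l))"
    unfolding sum_distrib_left
    by (intro sum.cong refl) (subst binomial_mult_gbinomial_half; simp add: mult.assoc)
  finally show ?thesis .
qed

end
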